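(* Let $X$ be a finite set and $f:2^X\to\mathbb{R}_{\ge0}$ a normalized monotone submodular function which possesses supermodularity of conditioning. Then for every $S\subseteq X$ and every $x\in X\setminus S$, \[ f(x\mid S)\ \ge\ f(x)-\sum_{y\in S}\big(f(x)-f(x\mid y)\big). \]
   Context: $f(x\mid A):=f(A\cup\{x\})-f(A)$, and more generally for sets $T,A$, $f(T\mid A):=f(A\cup T)-f(A)$; $f(T\mid A,C):=f(T\mid A\cup C)$; $f(x):=f(\{x\})$, $f(x\mid y):=f(x\mid\{y\})$. Supermodularity of conditioning: for all $S\subseteq X$, $A\subseteq B\subseteq X$ and $C\subseteq X\setminus B$, $f(S\mid A)-f(S\mid A\cup C)\ge f(S\mid B)-f(S\mid B\cup C)$. *)

theory Defs
  imports Complex_Main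
begin

definition cond :: "('a set \<Rightarrow> real) \<Rightarrow> 'a set \<Rightarrow> 'a set \<Rightarrow> real" where
  "cond f T A = f (A \<union> T) - f A"

definition normalized :: "('a set \<Rightarrow> real) \<Rightarrow> bool" where
  "normalized f \<longleftrightarrow> f {} = 0"

definition nonneg_on :: "'a set \<Rightarrow> ('a set \<Rightarrow> real) \<Rightarrow> bool" where
  "nonneg_on X f \<longleftrightarrow> (\<forall>A. A \<subseteq> X \<longrightarrow> f A \<ge> 0)"

definition monotone_set_fun :: "'a set \<Rightarrow> ('a set \<Rightarrow> real) \<Rightarrow> bool" where
  "monotone_set_fun X f \<longleftrightarrow> (\<forall>A B. A \<subseteq> B \<longrightarrow> B \<subseteq> X \<longrightarrow> f A \<le> f B)"

definition submodular :: "'a set \<Rightarrow> ('a set \<Rightarrow> real) \<Rightarrow> bool" where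
  "submodular X f \<longleftrightarrow>
     (\<forall>A B. A \<subseteq> X \<longrightarrow> B \<subseteq> X \<longrightarrow> f (A \<union> B) + f (A \<inter> B) \<le> f A + f B)"

definition supermodular_conditioning :: "'a set \<Rightarrow> ('a set \<Rightarrow> real) \<Rightarrow> bool" where
  "supermodular_conditioning X f \<longleftrightarrow>
     (\<forall>S A B C. S \<subseteq> X \<longrightarrow> A \<subseteq> B \<longrightarrow> B \<subseteq> X \<longrightarrow> C \<subseteq> X - B \<longrightarrow>
        cond f S A - cond f S (A \<union> C) \<ge> cond f S B - cond f S (B \<union> C))"

end

theory Submission
  imports Defs
begin

text \<open>Adding one element y to the conditioning set S costs x at most the loss
  f(x) - f(x | y) it would suffer from y alone (supermodularity of conditioning with
  A = {}, B = S, C = {y}); summing these losses over the elements of S gives the bound.\<close>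

lemma cond_empty:
  assumes "normalized f"
  shows "cond f T {} = f T"
  using assms by (simp add: cond_def normalized_def)

lemma cond_insert_loss_le:
  assumes "supermodular_conditioning X f" and "normalized f"
    and "S \<subseteq> X" and "T \<subseteq> X" and "y \<in> X - S"
  shows "cond f T S - cond f T (insert y S) \<le> f T - cond f T {y}"
proof -
  have "{y} \<subseteq> X - S"
    using assms(5) by simp
  then have "cond f T {} - cond f T ({} \<union> {y}) \<ge> cond f T S - cond f T (S \<union> {y})"
    using assms(1,3,4) unfolding supermodular_conditioning_def by (meson empty_subsetI)
  then show ?thesis
    using cond_empty[OF assms(2)] by simp
qed

lemma cond_singleton_ge_sum_losses:
  assumes "supermodular_conditioning X f" and "normalized f"
    and "finite S" and "S \<subseteq> X" and "x \<in> X - S"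
  shows "cond f {x} S \<ge> f {x} - (\<Sum>y\<in>S. f {x} - cond f {x} {y})"
  using assms(3-5)
proof (induction S rule: finite_induct)
  case empty
  then show ?case using cond_empty[OF assms(2)] by simp
next
  case (insert y S)
  have "cond f {x} S - cond f {x} (insert y S) \<le> f {x} - cond f {x} {y}"
    using cond_insert_loss_le[OF assms(1,2), of S "{x}" y] insert.hyps insert.prems by simp
  with insert show ?case by simp
qed

theorem theorem4:
  fixes X :: "'a set" and f :: "'a set \<Rightarrow> real"
  assumes "finite X"
    and "nonneg_on X f"
    and "normalized f"
    and "monotone_set_fun X f"
    and "submodular X f"
    and "supermodular_conditioning X f"
    and "S \<subseteq> X" and "x \<in> X - S"
  shows "cond f {x} S \<ge> f {x} - (\<Sum>y\<in>S. f {x} - cond f {x} {y})"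
  using cond_singleton_ge_sum_losses[OF assms(6,3)] assms(1,7,8) finite_subset by metis

end
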